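(* Let $s,t\in\mathbb{N}$ and $\varepsilon,k,m>0$. The following are equivalent, where each group is considered with the generating set $\{a,b\}$ of its standard presentation: (1) $BS(s,t)$ is $\varepsilon$-densely $(k,m)$-chordal; (2) $BS(-s,t)$ is; (3) $BS(s,-t)$ is; (4) $BS(-s,-t)$ is; (5) $BS(t,s)$ is; (6) $BS(-t,s)$ is; (7) $BS(t,-s)$ is; (8) $BS(-t,-s)$ is.
   Context: For integers $p,q$, $BS(p,q)=\langle a,b\mid ba^pb^{-1}=a^q\rangle$. A group is called $\varepsilon$-densely $(k,m)$-chordal if its Cayley graph with respect to $\{a,b\}$ (vertices the group elements, edges $\{g,gs\}$ for $s\in\{a^{\pm1},b^{\pm1}\}$, each edge of length 1) is. A cycle is a simple closed path (length at least 3); $L$ denotes length and $d_\gamma$ the length metric on the cycle $\gamma$. A shortcut in $\gamma$ is a path $\sigma$ joining vertices $p,q$ of $\gamma$ with $L(\sigma)<d_\gamma(p,q)$; it is strict if $\sigma\cap\gamma=\{p,q\}$, and $p,q$ are its associated shortcut vertices. A graph is $\varepsilon$-densely $(k,m)$-chordal if for every cycle $\gamma$ with $L(\gamma)\ge k$ there are strict shortcuts $\sigma_1,\dots,\sigma_r$ with $L(\sigma_i)\le m$ whose associated shortcut vertices form an $\varepsilon$-dense subset of $(\gamma,d_\gamma)$. *)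

theory Defs
  imports Main "HOL.Real"
begin

text \<open>Length metric on a cycle of n unit-length edges, realised as the circle
  [0,n) with vertex number i sitting at parameter i.\<close>
definition cyc_dist :: "nat \<Rightarrow> real \<Rightarrow> real \<Rightarrow> real" where
  "cyc_dist n x y = min \<bar>x - y\<bar> (real n - \<bar>x - y\<bar>)"

definition is_cycle :: "'v set \<Rightarrow> ('v \<Rightarrow> 'v \<Rightarrow> bool) \<Rightarrow> 'v list \<Rightarrow> bool" where
  "is_cycle V E cs \<longleftrightarrow> length cs \<ge> 3 \<and> distinct cs \<and> set cs \<subseteq> V \<and>
     (\<forall>i < length cs. E (cs ! i) (cs ! ((i + 1) mod length cs)))"

text \<open>A path: nonempty vertex list, consecutive vertices adjacent; its length is length - 1.\<close>
definition is_path :: "'v set \<Rightarrow> ('v \<Rightarrow> 'v \<Rightarrow> bool) \<Rightarrow> 'v list \<Rightarrow> bool" where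
  "is_path V E ps \<longleftrightarrow> ps \<noteq> [] \<and> set ps \<subseteq> V \<and>
     (\<forall>i. Suc i < length ps \<longrightarrow> E (ps ! i) (ps ! Suc i))"

text \<open>Strictness (the path meets the cycle only in its endpoints): interior vertices
  avoid the cycle; no edge of ps can be an edge of the cycle because the length
  condition forces cs!i, cs!j to be non-consecutive on the cycle.\<close>
definition strict_shortcut ::
  "'v set \<Rightarrow> ('v \<Rightarrow> 'v \<Rightarrow> bool) \<Rightarrow> 'v list \<Rightarrow> nat \<Rightarrow> nat \<Rightarrow> 'v list \<Rightarrow> bool" where
  "strict_shortcut V E cs i j ps \<longleftrightarrow>
     is_path V E ps \<and> i < length cs \<and> j < length cs \<and>
     hd ps = cs ! i \<and> last ps = cs ! j \<and>
     real (length ps - 1) < cyc_dist (length cs) (real i) (real j) \<and>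
     (\<forall>l. 0 < l \<and> l < length ps - 1 \<longrightarrow> ps ! l \<notin> set cs)"

definition densely_chordal ::
  "'v set \<Rightarrow> ('v \<Rightarrow> 'v \<Rightarrow> bool) \<Rightarrow> real \<Rightarrow> real \<Rightarrow> real \<Rightarrow> bool" where
  "densely_chordal V E \<epsilon> k m \<longleftrightarrow>
     (\<forall>cs. is_cycle V E cs \<and> real (length cs) \<ge> k \<longrightarrow>
        (\<exists>S. finite S \<and>
           (\<forall>(i, j) \<in> S. \<exists>ps. strict_shortcut V E cs i j ps \<and> real (length ps - 1) \<le> m) \<and>
           (\<forall>x. 0 \<le> x \<and> x < real (length cs) \<longrightarrow>
              (\<exists>(i, j) \<in> S. cyc_dist (length cs) x (real i) \<le> \<epsilon> \<or>
                             cyc_dist (length cs) x (real j) \<le> \<epsilon>))))"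

datatype gen = GA | GB

text \<open>Letters: (generator, True) = generator, (generator, False) = its inverse.\<close>
type_synonym letter = "gen \<times> bool"

definition apow :: "int \<Rightarrow> letter list" where
  "apow n = (if n \<ge> 0 then replicate (nat n) (GA, True) else replicate (nat (- n)) (GA, False))"

text \<open>Word equality in BS(p,q) = < a, b | b a^p b^-1 = a^q >: the congruence on words
  generated by free cancellation and the defining relation.\<close>
inductive bs_eq :: "int \<Rightarrow> int \<Rightarrow> letter list \<Rightarrow> letter list \<Rightarrow> bool" for p q where
  refl: "bs_eq p q w w"
| sym: "bs_eq p q u v \<Longrightarrow> bs_eq p q v u"
| trans: "bs_eq p q u v \<Longrightarrow> bs_eq p q v w \<Longrightarrow> bs_eq p q u w"
| cancel: "bs_eq p q [(x, e), (x, \<not> e)] []"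
| rel: "bs_eq p q ([(GB, True)] @ apow p @ [(GB, False)]) (apow q)"
| cong: "bs_eq p q u v \<Longrightarrow> bs_eq p q u' v' \<Longrightarrow> bs_eq p q (u @ u') (v @ v')"

definition bs_elt :: "int \<Rightarrow> int \<Rightarrow> letter list \<Rightarrow> letter list set" where
  "bs_elt p q w = {v. bs_eq p q w v}"

definition bs_vertices :: "int \<Rightarrow> int \<Rightarrow> letter list set set" where
  "bs_vertices p q = range (bs_elt p q)"

definition bs_adj :: "int \<Rightarrow> int \<Rightarrow> letter list set \<Rightarrow> letter list set \<Rightarrow> bool" where
  "bs_adj p q g h \<longleftrightarrow> (\<exists>w l. g = bs_elt p q w \<and> h = bs_elt p q (w @ [l]))"

definition BS_densely_chordal :: "int \<Rightarrow> int \<Rightarrow> real \<Rightarrow> real \<Rightarrow> real \<Rightarrow> bool" where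
  "BS_densely_chordal p q \<epsilon> k m = densely_chordal (bs_vertices p q) (bs_adj p q) \<epsilon> k m"

end

theory Submission
  imports Defs
begin

text \<open>The eight groups fall into three kinds of pairs whose Cayley graphs are isomorphic, and
  dense chordality is a property of the graph alone. BS(p,q) and BS(-p,-q) have equivalent
  defining relations, hence are the same group. Replacing b by b\<inverse> maps the relation of BS(p,q)
  to a consequence of the relation of BS(q,p), so it induces a group isomorphism. BS(p,q) and
  BS(-p,q) are in general not isomorphic, but the word map that inverts every a preceded by an
  odd number of b-letters is well defined on group elements, because the relations preserve
  the parity of the number of b-letters; it is an involution and compatible with right
  multiplication by generators, hence a Cayley graph isomorphism.\<close>

lemma is_path_map:
  assumes "f ` V \<subseteq> V'" and "\<And>x y. x \<in> V \<Longrightarrow> y \<in> V \<Longrightarrow> E x y \<Longrightarrow> E' (f x) (f y)"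
    and "is_path V E ps"
  shows "is_path V' E' (map f ps)"
  using assms unfolding is_path_def by (auto simp: subset_iff)

lemma is_cycle_map:
  assumes "f ` V \<subseteq> V'" and "\<And>x y. x \<in> V \<Longrightarrow> y \<in> V \<Longrightarrow> E x y \<Longrightarrow> E' (f x) (f y)"
    and "inj_on f V" and "is_cycle V E cs"
  shows "is_cycle V' E' (map f cs)"
proof -
  have "Suc i mod length cs < length cs" if "i < length cs" for i
    using that by (intro mod_less_divisor) linarith
  then show ?thesis
    using assms unfolding is_cycle_def by (auto simp: distinct_map inj_on_subset subset_iff)
qed

lemma strict_shortcut_map:
  assumes "f ` V \<subseteq> V'" and "\<And>x y. x \<in> V \<Longrightarrow> y \<in> V \<Longrightarrow> E x y \<Longrightarrow> E' (f x) (f y)"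
    and "inj_on f V" and "set cs \<subseteq> V" and "strict_shortcut V E cs i j ps"
  shows "strict_shortcut V' E' (map f cs) i j (map f ps)"
proof -
  have path: "is_path V E ps" and "ps \<noteq> []" "set ps \<subseteq> V"
    using assms(5) by (auto simp: strict_shortcut_def is_path_def)
  have "\<forall>l. 0 < l \<and> l < length (map f ps) - 1 \<longrightarrow> map f ps ! l \<notin> set (map f cs)"
  proof (intro allI impI)
    fix l assume l: "0 < l \<and> l < length (map f ps) - 1"
    then have "l < length ps"
      by auto
    then have "ps ! l \<in> V"
      using \<open>set ps \<subseteq> V\<close> by (meson nth_mem subsetD)
    moreover have "ps ! l \<notin> set cs"
      using assms(5) l by (simp add: strict_shortcut_def)
    ultimately show "map f ps ! l \<notin> set (map f cs)"
      using \<open>l < length ps\<close> assms(3,4) by (simp add: inj_on_image_mem_iff)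
  qed
  then show ?thesis
    using assms(5) is_path_map[of f V V' E E', OF assms(1,2) path] \<open>ps \<noteq> []\<close>
    by (simp add: strict_shortcut_def hd_map last_map)
qed

lemma densely_chordal_transfer:
  assumes f: "f ` V \<subseteq> V'" and g: "g ` V' \<subseteq> V"
    and gf: "\<And>x. x \<in> V \<Longrightarrow> g (f x) = x" and fg: "\<And>y. y \<in> V' \<Longrightarrow> f (g y) = y"
    and fE: "\<And>x y. x \<in> V \<Longrightarrow> y \<in> V \<Longrightarrow> E x y \<Longrightarrow> E' (f x) (f y)"
    and gE: "\<And>x y. x \<in> V' \<Longrightarrow> y \<in> V' \<Longrightarrow> E' x y \<Longrightarrow> E (g x) (g y)"
    and "densely_chordal V E \<epsilon> k m"
  shows "densely_chordal V' E' \<epsilon> k m"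
  unfolding densely_chordal_def
proof (intro allI impI, goal_cases)
  case (1 cs')
  note cs' = this
  have "inj_on f V" "inj_on g V'"
    using gf fg by (metis inj_onI)+
  have "set cs' \<subseteq> V'"
    using cs' by (simp add: is_cycle_def)
  then have map_fg: "map f (map g cs') = cs'"
    using fg by (simp add: map_idI subset_iff)
  have "is_cycle V E (map g cs')"
    using is_cycle_map[of g V' V E' E, OF g gE \<open>inj_on g V'\<close>] cs' by simp
  moreover have "k \<le> real (length (map g cs'))"
    using cs' by simp
  ultimately obtain S where "finite S"
    and S: "\<forall>(i, j) \<in> S. \<exists>ps. strict_shortcut V E (map g cs') i j ps \<and> real (length ps - 1) \<le> m"
    and dense: "\<forall>x. 0 \<le> x \<and> x < real (length cs') \<longrightarrow>
      (\<exists>(i, j) \<in> S. cyc_dist (length cs') x (real i) \<le> \<epsilon> \<or> cyc_dist (length cs') x (real j) \<le> \<epsilon>)"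
    using assms(7)[unfolded densely_chordal_def, rule_format, of "map g cs'"] by auto
  have "set (map g cs') \<subseteq> V"
    using g \<open>set cs' \<subseteq> V'\<close> by auto
  note shortcut_map = strict_shortcut_map[of f V V' E E', OF f fE \<open>inj_on f V\<close> this, unfolded map_fg]
  have "\<exists>ps. strict_shortcut V' E' cs' i j ps \<and> real (length ps - 1) \<le> m" if ij: "(i, j) \<in> S" for i j
  proof -
    obtain ps where "strict_shortcut V E (map g cs') i j ps" "real (length ps - 1) \<le> m"
      using bspec[OF S ij] by auto
    then show ?thesis
      using shortcut_map by (intro exI[of _ "map f ps"]) simp
  qed
  then have "\<forall>(i, j) \<in> S. \<exists>ps. strict_shortcut V' E' cs' i j ps \<and> real (length ps - 1) \<le> m"
    by auto
  with \<open>finite S\<close> dense show ?case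
    by blast
qed

definition b_count :: "letter list \<Rightarrow> nat" where
  "b_count w = length (filter (\<lambda>l. fst l = GB) w)"

lemma b_count_simps [simp]:
  "b_count [] = 0" "b_count ((GA, e) # w) = b_count w" "b_count ((GB, e) # w) = Suc (b_count w)"
  "b_count (u @ v) = b_count u + b_count v"
  by (auto simp: b_count_def)

lemma b_count_apow [simp]: "b_count (apow n) = 0"
  by (simp add: apow_def b_count_def)

lemma bs_eq_even_b_count: "bs_eq p q u v \<Longrightarrow> even (b_count u) \<longleftrightarrow> even (b_count v)"
proof (induction rule: bs_eq.induct)
  case (cancel x e)
  then show ?case
    by (cases x) simp_all
qed auto

declare bs_eq.trans [trans]

lemma bs_eq_context: "bs_eq p q u v \<Longrightarrow> bs_eq p q (x @ u @ y) (x @ v @ y)"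
  by (intro bs_eq.cong bs_eq.refl)

definition word_inv :: "letter list \<Rightarrow> letter list" where
  "word_inv w = rev (map (\<lambda>(x, e). (x, \<not> e)) w)"

lemma word_inv_simps [simp]:
  "word_inv [] = []" "word_inv ((x, e) # w) = word_inv w @ [(x, \<not> e)]"
  "word_inv (u @ v) = word_inv v @ word_inv u"
  by (simp_all add: word_inv_def)

lemma word_inv_apow [simp]: "word_inv (apow n) = apow (- n)"
  by (auto simp: apow_def word_inv_def)

lemma word_inv_word_inv [simp]: "word_inv (word_inv w) = w"
  by (induction w) (auto simp: word_inv_def)

lemma bs_eq_append_word_inv: "bs_eq p q (w @ word_inv w) []"
proof (induction w)
  case Nil
  then show ?case
    by (simp add: bs_eq.refl)
next
  case (Cons l w)
  obtain x e where l: "l = (x, e)"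
    by force
  have "bs_eq p q ((l # w) @ word_inv (l # w)) ([l] @ (w @ word_inv w) @ [(x, \<not> e)])"
    by (simp add: l bs_eq.refl)
  also have "bs_eq p q \<dots> ([l] @ [] @ [(x, \<not> e)])"
    using Cons by (rule bs_eq_context)
  also have "bs_eq p q \<dots> []"
    using bs_eq.cancel[of p q x e] by (simp add: l)
  finally show ?case .
qed

lemma bs_eq_word_inv:
  assumes "bs_eq p q u v"
  shows "bs_eq p q (word_inv u) (word_inv v)"
proof -
  have "bs_eq p q (word_inv u) (word_inv u @ (v @ word_inv v) @ [])"
    using bs_eq_context[OF bs_eq.sym[OF bs_eq_append_word_inv], where x = "word_inv u" and y = "[]"]
    by simp
  also have "bs_eq p q \<dots> (word_inv u @ (u @ word_inv v) @ [])"
    using bs_eq_context[OF bs_eq.sym[OF assms], where x = "word_inv u" and y = "word_inv v"] by simp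
  also have "bs_eq p q \<dots> ([] @ [] @ word_inv v)"
    using bs_eq_context[OF bs_eq_append_word_inv[of p q "word_inv u"], where x = "[]" and y = "word_inv v"]
    by simp
  finally show ?thesis
    by simp
qed

lemma bs_eq_rel_inverse: "bs_eq p q ([(GB, True)] @ apow (- p) @ [(GB, False)]) (apow (- q))"
  using bs_eq_word_inv[OF bs_eq.rel[of p q]] by simp

lemma bs_eq_rel_conj: "bs_eq q p ([(GB, False)] @ apow p @ [(GB, True)]) (apow q)"
proof -
  have "bs_eq q p ([(GB, False)] @ apow p @ [(GB, True)])
      ([(GB, False)] @ ([(GB, True)] @ apow q @ [(GB, False)]) @ [(GB, True)])"
    by (rule bs_eq_context, rule bs_eq.sym, rule bs_eq.rel)
  also have "\<dots> = [(GB, False), (GB, True)] @ apow q @ [(GB, False), (GB, True)]"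
    by simp
  also have "bs_eq q p \<dots> ([] @ apow q @ [])"
    using bs_eq.cancel[of q p GB False] by (intro bs_eq.cong bs_eq.refl) simp_all
  finally show ?thesis
    by simp
qed

text \<open>recode True False False inverts exactly the a-letters preceded by an odd number of
  b-letters; recode False False True replaces b by b\<inverse>.\<close>

fun recode :: "bool \<Rightarrow> bool \<Rightarrow> bool \<Rightarrow> letter list \<Rightarrow> letter list" where
  "recode t c d [] = []"
| "recode t c d ((GA, e) # w) = (GA, e \<noteq> c) # recode t c d w"
| "recode t c d ((GB, e) # w) = (GB, e \<noteq> d) # recode t (c \<noteq> t) d w"

lemma recode_Cons: "\<exists>l' c'. recode t c d (l # w) = l' # recode t c' d w"
proof -
  obtain x e where "l = (x, e)"
    by force
  then show ?thesis
    by (cases x) auto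
qed

lemma recode_append:
  "recode t c d (u @ v) = recode t c d u @ recode t (c \<noteq> (t \<and> odd (b_count u))) d v"
proof (induction u arbitrary: c)
  case (Cons l u)
  obtain x e where "l = (x, e)"
    by force
  with Cons show ?case
    by (cases x; cases t; cases c) auto
qed simp

lemma recode_recode [simp]: "recode t c d (recode t c d w) = w"
  by (induction t c d w rule: recode.induct) auto

lemma recode_snoc: "\<exists>l'. recode t c d (w @ [l]) = recode t c d w @ [l']"
  using recode_Cons[of t _ d l "[]"] by (auto simp: recode_append)

lemma recode_apow [simp]: "recode t c d (apow n) = apow (if c then - n else n)"
proof -
  have "recode t c d (replicate k (GA, e)) = replicate k (GA, e \<noteq> c)" for k e c
    by (induction k) auto
  then show ?thesis
    by (simp add: apow_def)
qed

lemma recode_respects: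
  assumes rel: "\<And>c. bs_eq p' q' (recode t c d ([(GB, True)] @ apow p @ [(GB, False)]))
                               (recode t c d (apow q))"
  shows "bs_eq p q u v \<Longrightarrow> bs_eq p' q' (recode t c d u) (recode t c d v)"
proof (induction arbitrary: c rule: bs_eq.induct)
  case (refl w)
  show ?case
    by (rule bs_eq.refl)
next
  case (sym u v)
  then show ?case
    by (blast intro: bs_eq.sym)
next
  case (trans u v w)
  then show ?case
    by (blast intro: bs_eq.trans)
next
  case (cancel x e)
  show ?case
  proof (cases x)
    case GA
    then show ?thesis
      using bs_eq.cancel[of p' q' GA "e \<noteq> c"] by simp
  next
    case GB
    then show ?thesis
      using bs_eq.cancel[of p' q' GB "e \<noteq> d"] by simp
  qed
next
  case (cong u v u' v')
  then show ?case
    using bs_eq_even_b_count[OF cong.hyps(1)] by (simp add: recode_append bs_eq.cong)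
qed (rule rel)

lemma bs_elt_eqI:
  assumes "bs_eq p q u v"
  shows "bs_elt p q u = bs_elt p q v"
  using bs_eq.trans[OF assms] bs_eq.trans[OF bs_eq.sym[OF assms]] by (auto simp: bs_elt_def)

lemma UN_bs_elt:
  assumes "\<And>u v. bs_eq p q u v \<Longrightarrow> bs_eq p' q' (F u) (F v)"
  shows "(\<Union>u \<in> bs_elt p q w. bs_elt p' q' (F u)) = bs_elt p' q' (F w)"
proof -
  have "bs_elt p' q' (F u) = bs_elt p' q' (F w)" if "u \<in> bs_elt p q w" for u
  proof (rule bs_elt_eqI, rule bs_eq.sym, rule assms)
    show "bs_eq p q w u"
      using that by (simp add: bs_elt_def)
  qed
  moreover have "w \<in> bs_elt p q w"
    by (simp add: bs_elt_def bs_eq.refl)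
  ultimately show ?thesis
    by blast
qed

lemma BS_densely_chordal_transfer:
  assumes resp: "\<And>u v. bs_eq p q u v \<Longrightarrow> bs_eq p' q' (F u) (F v)"
    and resp': "\<And>u v. bs_eq p' q' u v \<Longrightarrow> bs_eq p q (F u) (F v)"
    and invol: "\<And>w. F (F w) = w"
    and snoc: "\<And>w l. \<exists>l'. F (w @ [l]) = F w @ [l']"
    and "BS_densely_chordal p q \<epsilon> k m"
  shows "BS_densely_chordal p' q' \<epsilon> k m"
proof -
  define f where "f X = (\<Union>u \<in> X. bs_elt p' q' (F u))" for X
  define g where "g Y = (\<Union>u \<in> Y. bs_elt p q (F u))" for Y
  have f_elt: "f (bs_elt p q w) = bs_elt p' q' (F w)" for w
    unfolding f_def using resp by (rule UN_bs_elt)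
  have g_elt: "g (bs_elt p' q' w) = bs_elt p q (F w)" for w
    unfolding g_def using resp' by (rule UN_bs_elt)
  have f_adj: "bs_adj p' q' (f x) (f y)" if adj: "bs_adj p q x y" for x y
  proof -
    obtain w l where "x = bs_elt p q w" "y = bs_elt p q (w @ [l])"
      using adj unfolding bs_adj_def by blast
    moreover obtain l' where "F (w @ [l]) = F w @ [l']"
      using snoc by blast
    ultimately show ?thesis
      unfolding bs_adj_def by (metis f_elt)
  qed
  have g_adj: "bs_adj p q (g x) (g y)" if adj: "bs_adj p' q' x y" for x y
  proof -
    obtain w l where "x = bs_elt p' q' w" "y = bs_elt p' q' (w @ [l])"
      using adj unfolding bs_adj_def by blast
    moreover obtain l' where "F (w @ [l]) = F w @ [l']"
      using snoc by blast
    ultimately show ?thesis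
      unfolding bs_adj_def by (metis g_elt)
  qed
  show ?thesis
    using assms(5) unfolding BS_densely_chordal_def
    by (rule densely_chordal_transfer[of f _ _ g, rotated 6])
      (auto simp: bs_vertices_def f_elt g_elt invol f_adj g_adj)
qed

lemma BS_densely_chordal_recode:
  assumes "\<And>c. bs_eq p' q' (recode t c d ([(GB, True)] @ apow p @ [(GB, False)]))
                           (recode t c d (apow q))"
    and "\<And>c. bs_eq p q (recode t c d ([(GB, True)] @ apow p' @ [(GB, False)]))
                           (recode t c d (apow q'))"
  shows "BS_densely_chordal p' q' \<epsilon> k m \<longleftrightarrow> BS_densely_chordal p q \<epsilon> k m"
proof
  note resp = recode_respects[OF assms(1), where c = False]
    and resp' = recode_respects[OF assms(2), where c = False]
  show "BS_densely_chordal p q \<epsilon> k m" if "BS_densely_chordal p' q' \<epsilon> k m"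
    using resp' resp recode_recode recode_snoc that by (rule BS_densely_chordal_transfer)
  show "BS_densely_chordal p' q' \<epsilon> k m" if "BS_densely_chordal p q \<epsilon> k m"
    using resp resp' recode_recode recode_snoc that by (rule BS_densely_chordal_transfer)
qed

lemma bs_eq_uminus: "bs_eq (- p) (- q) = bs_eq p q"
proof -
  have "bs_eq (- p) (- q) u v" if "bs_eq p q u v" for p q u v
    using that
  proof (induction rule: bs_eq.induct)
    case rel
    show ?case
      using bs_eq_rel_inverse[of "- p" "- q"] by simp
  qed (rule bs_eq.intros; assumption)+
  from this[of "- p" "- q"] this[of p q] show ?thesis
    by (auto intro!: ext)
qed

lemma BS_densely_chordal_uminus:
  "BS_densely_chordal (- p) (- q) \<epsilon> k m \<longleftrightarrow> BS_densely_chordal p q \<epsilon> k m"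
  unfolding BS_densely_chordal_def bs_vertices_def bs_adj_def[abs_def] bs_elt_def[abs_def] bs_eq_uminus ..

lemma BS_densely_chordal_uminus_left:
  "BS_densely_chordal (- p) q \<epsilon> k m \<longleftrightarrow> BS_densely_chordal p q \<epsilon> k m"
proof -
  have rel: "bs_eq (- p) q (recode True c False ([(GB, True)] @ apow p @ [(GB, False)]))
                      (recode True c False (apow q))" for p c
    using bs_eq.rel[of "- p" q] bs_eq_rel_inverse[of "- p" q] by (cases c) (simp_all add: recode_append)
  show ?thesis
    by (rule BS_densely_chordal_recode[OF rel[of p]]) (use rel[of "- p"] in simp)
qed

lemma BS_densely_chordal_uminus_right:
  "BS_densely_chordal p (- q) \<epsilon> k m \<longleftrightarrow> BS_densely_chordal p q \<epsilon> k m"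
  using BS_densely_chordal_uminus_left[of "- p" "- q"] BS_densely_chordal_uminus[of p q] by simp

lemma BS_densely_chordal_swap:
  "BS_densely_chordal q p \<epsilon> k m \<longleftrightarrow> BS_densely_chordal p q \<epsilon> k m"
proof -
  have rel: "bs_eq q p (recode False c True ([(GB, True)] @ apow p @ [(GB, False)]))
                  (recode False c True (apow q))" for p q c
    using bs_eq_rel_conj[of q p] bs_eq_word_inv[OF bs_eq_rel_conj[of q p]]
    by (cases c) (simp_all add: recode_append)
  show ?thesis
    by (rule BS_densely_chordal_recode[OF rel[where p = p and q = q] rel[where p = q and q = p]])
qed

theorem proposition2:
  fixes s t :: nat and \<epsilon> k m :: real
  assumes "\<epsilon> > 0" and "k > 0" and "m > 0"
  shows "(BS_densely_chordal (int s) (int t) \<epsilon> k m \<longleftrightarrow> BS_densely_chordal (- int s) (int t) \<epsilon> k m) \<and>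
         (BS_densely_chordal (int s) (int t) \<epsilon> k m \<longleftrightarrow> BS_densely_chordal (int s) (- int t) \<epsilon> k m) \<and>
         (BS_densely_chordal (int s) (int t) \<epsilon> k m \<longleftrightarrow> BS_densely_chordal (- int s) (- int t) \<epsilon> k m) \<and>
         (BS_densely_chordal (int s) (int t) \<epsilon> k m \<longleftrightarrow> BS_densely_chordal (int t) (int s) \<epsilon> k m) \<and>
         (BS_densely_chordal (int s) (int t) \<epsilon> k m \<longleftrightarrow> BS_densely_chordal (- int t) (int s) \<epsilon> k m) \<and>
         (BS_densely_chordal (int s) (int t) \<epsilon> k m \<longleftrightarrow> BS_densely_chordal (int t) (- int s) \<epsilon> k m) \<and>
         (BS_densely_chordal (int s) (int t) \<epsilon> k m \<longleftrightarrow> BS_densely_chordal (- int t) (- int s) \<epsilon> k m)"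
  using BS_densely_chordal_uminus_left BS_densely_chordal_uminus_right BS_densely_chordal_uminus
    BS_densely_chordal_swap[of "int s" "int t"]
  by simp

end
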